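(* If $C\subset\mathbb P^2$ is a plane curve of degree $d$ through $O$, smooth at $O$, then $\hat\mu(C,s)=s/d$ for all $s\ge d^2$. Hence $v_1(C,s)$ is minimal for $s=d^2$ and not minimal for $s>d^2$.
   Context: Work over $\mathbb C$; $x=X/Z$, $y=Y/Z$, $O=(0,0)$; $C$ tangent to $\{y=0\}$ at $O$, locally $x\mapsto(x,\xi(x))$, $\xi(0)=\xi'(0)=0$. For $f\ne0$ with $C$-expansion $f=\sum a_{ij}x^i(y-\xi(x))^j$, $v_1(C,s;f)=\min\{i+sj:a_{ij}\ne0\}$ (real $s\ge1$). $\hat\mu(C,s)=\lim_{k\to\infty}\frac1k\max\{v_1(C,s;F/Z^k):F\ne0\text{ homogeneous of degree }k\}$; one always has $\hat\mu(C,s)\ge\sqrt s$, and $v_1(C,s)$ is called minimal if $\hat\mu(C,s)=\sqrt s$. *)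

theory Defs
  imports Complex_Main "HOL-Computational_Algebra.Polynomial_FPS"
begin

text \<open>Affine polynomials in x = X/Z, y = Y/Z are represented as elements of
  complex poly poly: the outer variable is y, the coefficients are polynomials in x.\<close>

definition tdeg :: "complex poly poly \<Rightarrow> nat" where
  "tdeg f = Max ({degree (coeff f j) + j | j. coeff f j \<noteq> 0} \<union> {0})"

text \<open>C-expansion: substitute y = w + xi(x); the result is a polynomial in w whose
  coefficients are power series in x; a_ij = coefficient of x^i w^j.\<close>
definition C_expansion :: "complex fps \<Rightarrow> complex poly poly \<Rightarrow> complex fps poly" where
  "C_expansion xi f = pcompose (map_poly fps_of_poly f) [:xi, 1:]"

definition v1 :: "complex fps \<Rightarrow> real \<Rightarrow> complex poly poly \<Rightarrow> real" where
  "v1 xi s f = Inf {real i + s * real j | i j. fps_nth (coeff (C_expansion xi f) j) i \<noteq> 0}"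

text \<open>Max of v1 over nonzero homogeneous F of degree k, i.e. over nonzero f = F/Z^k
  of total degree at most k.\<close>
definition max_v1 :: "complex fps \<Rightarrow> real \<Rightarrow> nat \<Rightarrow> real" where
  "max_v1 xi s k = Sup {v1 xi s f | f. f \<noteq> 0 \<and> tdeg f \<le> k}"

definition mu_hat :: "complex fps \<Rightarrow> real \<Rightarrow> real" where
  "mu_hat xi s = lim (\<lambda>k. max_v1 xi s k / real k)"

definition v1_minimal :: "complex fps \<Rightarrow> real \<Rightarrow> bool" where
  "v1_minimal xi s \<longleftrightarrow> mu_hat xi s = sqrt s"

end

theory Submission
  imports Defs "Subresultants.Subresultant_Gcd" "HOL-Computational_Algebra.Field_as_Ring"
begin

text \<open>Along the smooth branch \<open>y = \<xi>(x)\<close> the curve is \<open>w\<close> times a unit, where \<open>w = y - \<xi>(x)\<close>.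
  Hence \<open>G\<^sup>m\<close> with \<open>m = k div d\<close> has degree at most \<open>k\<close> and \<open>v\<^sub>1 \<ge> s m\<close>, which gives the
  lower bound \<open>s/d\<close>. Conversely, write any \<open>f\<close> of degree at most \<open>k\<close> as \<open>G\<^sup>m h\<close> with \<open>\<not> G dvd h\<close>.
  The coefficient of \<open>w\<^sup>m\<close> in the expansion of \<open>f\<close> is a unit times \<open>h(x, \<xi>(x))\<close>, and this
  series divides the resultant \<open>Res\<^sub>y(h, G)\<close>, a nonzero polynomial in \<open>x\<close> of degree at most
  \<open>deg h \<cdot> d\<close>. So \<open>v\<^sub>1(f) \<le> (k - m d) d + s m\<close>, which is at most \<open>k s / d\<close> once \<open>s \<ge> d\<^sup>2\<close>.\<close>

interpretation fps_of_poly_hom: inj_idom_hom "fps_of_poly :: 'a::idom poly \<Rightarrow> 'a fps"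
  by unfold_locales (auto simp: fps_of_poly_mult fps_of_poly_add)

interpretation map_fps_of_poly_hom: map_poly_inj_idom_hom "fps_of_poly :: 'a::idom poly \<Rightarrow> 'a fps" ..

interpretation fps_nth_0_hom: comm_ring_hom "\<lambda>a::'a::comm_ring_1 fps. fps_nth a 0"
  by unfold_locales simp_all

subsection \<open>Total degree\<close>

lemma finite_tdeg_terms: "finite {degree (coeff f j) + j | j. coeff f j \<noteq> 0}"
proof -
  have "{degree (coeff f j) + j | j. coeff f j \<noteq> 0} \<subseteq> (\<lambda>j. degree (coeff f j) + j) ` {..degree f}"
    using le_degree by fastforce
  then show ?thesis
    by (rule finite_subset) simp
qed

lemma tdeg_ge: "coeff f j \<noteq> 0 \<Longrightarrow> degree (coeff f j) + j \<le> tdeg f"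
  unfolding tdeg_def using finite_tdeg_terms[of f] by (intro Max_ge) auto

lemma tdeg_leI: "(\<And>j. coeff f j \<noteq> 0 \<Longrightarrow> degree (coeff f j) + j \<le> B) \<Longrightarrow> tdeg f \<le> B"
  unfolding tdeg_def using finite_tdeg_terms[of f] by (subst Max_le_iff) auto

lemma degree_le_tdeg: "degree f \<le> tdeg f"
  by (cases "f = 0") (use tdeg_ge[of f "degree f"] in auto)

lemma tdeg_first_attaining_index:
  assumes "f \<noteq> 0"
  obtains j0 where "coeff f j0 \<noteq> 0" "degree (coeff f j0) + j0 = tdeg f"
    and "\<And>j. j < j0 \<Longrightarrow> coeff f j \<noteq> 0 \<Longrightarrow> degree (coeff f j) + j < tdeg f"
proof -
  define top where "top j \<longleftrightarrow> coeff f j \<noteq> 0 \<and> degree (coeff f j) + j = tdeg f" for j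
  have "\<exists>j. top j"
  proof (cases "tdeg f = 0")
    case True
    then have "degree f = 0"
      using degree_le_tdeg[of f] by simp
    then have "coeff f 0 \<noteq> 0"
      using leading_coeff_neq_0[OF assms] by simp
    then have "top 0"
      using tdeg_ge[of f 0] True unfolding top_def by simp
    then show ?thesis ..
  next
    case False
    have "tdeg f \<in> {degree (coeff f j) + j | j. coeff f j \<noteq> 0} \<union> {0}"
      unfolding tdeg_def using finite_tdeg_terms[of f] by (intro Max_in) auto
    with False show ?thesis
      unfolding top_def by auto
  qed
  then have "top (LEAST j. top j)" and "\<And>j. j < (LEAST j. top j) \<Longrightarrow> \<not> top j"
    by (auto intro: LeastI_ex dest: not_less_Least)
  with that show ?thesis
    unfolding top_def by (meson le_neq_implies_less tdeg_ge)
qed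

lemma tdeg_mult_le: "tdeg (a * b) \<le> tdeg a + tdeg b"
proof (rule tdeg_leI)
  fix n assume nz: "coeff (a * b) n \<noteq> 0"
  have cm: "coeff (a * b) n = (\<Sum>i\<le>n. coeff a i * coeff b (n - i))" by (rule coeff_mult)
  from nz obtain i where i: "i \<le> n" "coeff a i * coeff b (n - i) \<noteq> 0"
    unfolding cm by (meson sum.neutral atMost_iff)
  have "n \<le> tdeg a + tdeg b"
    using i tdeg_ge[of a i] tdeg_ge[of b "n - i"] by auto
  moreover have "degree (coeff (a * b) n) \<le> tdeg a + tdeg b - n"
    unfolding cm
  proof (rule degree_sum_le, simp)
    fix i assume "i \<in> {..n}"
    show "degree (coeff a i * coeff b (n - i)) \<le> tdeg a + tdeg b - n"
    proof (cases "coeff a i = 0 \<or> coeff b (n - i) = 0")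
      case False
      then have "degree (coeff a i) + i \<le> tdeg a" "degree (coeff b (n - i)) + (n - i) \<le> tdeg b"
        using tdeg_ge by auto
      with \<open>i \<in> {..n}\<close> degree_mult_le[of "coeff a i" "coeff b (n - i)"] show ?thesis
        by auto
    qed auto
  qed
  ultimately show "degree (coeff (a * b) n) + n \<le> tdeg a + tdeg b"
    by linarith
qed

text \<open>Let \<open>a\<^sub>0\<close>, \<open>b\<^sub>0\<close> be the first \<open>y\<close>-indices at which the total degrees of \<open>a\<close> and \<open>b\<close> are
  attained. In the coefficient of \<open>y\<^bsup>a\<^sub>0 + b\<^sub>0\<^esup>\<close> of \<open>a * b\<close>, every product other than the one
  at \<open>(a\<^sub>0, b\<^sub>0)\<close> has smaller total degree, so the top \<open>x\<close>-coefficient survives.\<close>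

lemma tdeg_mult_ge:
  assumes "a \<noteq> 0" and "b \<noteq> 0"
  shows "tdeg a + tdeg b \<le> tdeg (a * b)"
proof -
  obtain a0 where a0: "coeff a a0 \<noteq> 0" "degree (coeff a a0) + a0 = tdeg a"
    and below_a0: "\<And>j. j < a0 \<Longrightarrow> coeff a j \<noteq> 0 \<Longrightarrow> degree (coeff a j) + j < tdeg a"
    using tdeg_first_attaining_index[OF \<open>a \<noteq> 0\<close>] by blast
  obtain b0 where b0: "coeff b b0 \<noteq> 0" "degree (coeff b b0) + b0 = tdeg b"
    and below_b0: "\<And>j. j < b0 \<Longrightarrow> coeff b j \<noteq> 0 \<Longrightarrow> degree (coeff b j) + j < tdeg b"
    using tdeg_first_attaining_index[OF \<open>b \<noteq> 0\<close>] by blast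
  define n0 where "n0 = a0 + b0"
  define D where "D = degree (coeff a a0) + degree (coeff b b0)"
  have D_n0: "D + n0 = tdeg a + tdeg b"
    using a0 b0 unfolding D_def n0_def by simp
  have others: "coeff (coeff a i * coeff b (n0 - i)) D = 0" if i: "i \<le> n0" "i \<noteq> a0" for i
  proof (cases "coeff a i = 0 \<or> coeff b (n0 - i) = 0")
    case False
    then have "degree (coeff a i) + i \<le> tdeg a" "degree (coeff b (n0 - i)) + (n0 - i) \<le> tdeg b"
      using tdeg_ge by blast+
    moreover have "i < a0 \<or> n0 - i < b0"
      using i unfolding n0_def by auto
    ultimately have "degree (coeff a i) + degree (coeff b (n0 - i)) < D"
      using below_a0[of i] below_b0[of "n0 - i"] False D_n0 i(1) by fastforce
    then show ?thesis
      by (intro coeff_eq_0) (meson degree_mult_le le_less_trans)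
  qed auto
  have "coeff (coeff (a * b) n0) D = (\<Sum>i\<le>n0. coeff (coeff a i * coeff b (n0 - i)) D)"
    by (simp add: coeff_mult coeff_sum)
  also have "\<dots> = coeff (coeff a a0 * coeff b b0) D"
    using others by (subst sum.remove[of _ a0]) (auto simp: n0_def)
  also have "\<dots> = lead_coeff (coeff a a0) * lead_coeff (coeff b b0)"
    unfolding D_def by (metis a0(1) b0(1) degree_mult_eq lead_coeff_mult)
  finally have "coeff (coeff (a * b) n0) D \<noteq> 0"
    using a0(1) b0(1) by simp
  then have "coeff (a * b) n0 \<noteq> 0" and "D \<le> degree (coeff (a * b) n0)"
    using le_degree by fastforce+
  with tdeg_ge[of "a * b" n0] D_n0 show ?thesis
    by linarith
qed

lemma tdeg_mult: "a \<noteq> 0 \<Longrightarrow> b \<noteq> 0 \<Longrightarrow> tdeg (a * b) = tdeg a + tdeg b"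
  using tdeg_mult_ge tdeg_mult_le by (metis antisym)

lemma tdeg_1: "tdeg 1 = 0"
  by (rule antisym, rule tdeg_leI) (auto split: if_splits)

lemma tdeg_power: "a \<noteq> 0 \<Longrightarrow> tdeg (a ^ n) = n * tdeg a"
  by (induction n) (simp_all add: tdeg_1 tdeg_mult)

subsection \<open>Degree of the resultant\<close>

lemma degree_det_le_weights:
  fixes A :: "'a::comm_ring_1 poly mat" and r c :: "nat \<Rightarrow> int"
  assumes A: "A \<in> carrier_mat n n"
    and entry: "\<And>i j. i < n \<Longrightarrow> j < n \<Longrightarrow> A $$ (i, j) \<noteq> 0 \<Longrightarrow>
      int (degree (A $$ (i, j))) \<le> r i + c j"
  shows "degree (det A) \<le> nat ((\<Sum>i=0..<n. r i) + (\<Sum>j=0..<n. c j))"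
proof -
  define B where "B = nat ((\<Sum>i=0..<n. r i) + (\<Sum>j=0..<n. c j))"
  have "degree (signof p * (\<Prod>i=0..<n. A $$ (i, p i))) \<le> B" if p: "p permutes {0..<n}" for p
  proof (cases "\<exists>i<n. A $$ (i, p i) = 0")
    case True
    then have "(\<Prod>i=0..<n. A $$ (i, p i)) = 0"
      by (intro prod_zero) auto
    then show ?thesis
      by simp
  next
    case False
    have "int (degree (\<Prod>i=0..<n. A $$ (i, p i))) \<le> (\<Sum>i=0..<n. int (degree (A $$ (i, p i))))"
      using degree_prod_sum_le[of "{0..<n}" "\<lambda>i. A $$ (i, p i)"]
      by (simp add: comp_def flip: of_nat_sum)
    also have "\<dots> \<le> (\<Sum>i=0..<n. r i + c (p i))"
      using False entry permutes_in_image[OF p] by (intro sum_mono) auto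
    also have "\<dots> = (\<Sum>i=0..<n. r i) + (\<Sum>j=0..<n. c j)"
      using sum.permute[OF p, of c] by (simp add: sum.distrib comp_def)
    finally show ?thesis
      unfolding B_def by (simp add: sign_def)
  qed
  then show ?thesis
    unfolding det_def'[OF A] B_def[symmetric] by (intro degree_sum_le) (auto simp: finite_permutations)
qed

lemma degree_sylvester_entry_le:
  fixes h G :: "complex poly poly"
  assumes "i < degree h + degree G" and "j < degree h + degree G"
    and nz: "sylvester_mat h G $$ (i, j) \<noteq> 0"
  shows "int (degree (sylvester_mat h G $$ (i, j))) \<le>
    ((if i < degree G then int (tdeg h) - int (degree h) else int (tdeg G)) - int i) + int j"
proof (cases "i < degree G")
  case True
  with assms have "i \<le> j" "j - i \<le> degree h"
    and entry: "sylvester_mat h G $$ (i, j) = coeff h (degree h + i - j)"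
    by (auto simp: sylvester_index_mat split: if_splits)
  with nz tdeg_ge[of h "degree h + i - j"] True show ?thesis
    by auto
next
  case False
  with assms have "j \<le> i"
    and entry: "sylvester_mat h G $$ (i, j) = coeff G (i - j)"
    by (auto simp: sylvester_index_mat split: if_splits)
  with nz tdeg_ge[of G "i - j"] False show ?thesis
    by auto
qed

lemma sum_lessThan_if_less:
  "(\<Sum>i<n + m. if i < n then a else b) = of_nat n * a + of_nat m * (b :: 'a::comm_semiring_1)"
  by (induction m) (auto simp: algebra_simps)

lemma degree_resultant_le:
  fixes h G :: "complex poly poly"
  shows "degree (resultant h G) \<le> degree G * (tdeg h - degree h) + degree h * tdeg G"
proof -
  let ?m = "degree h" and ?n = "degree G"
  define r where "r i = (if i < ?n then int (tdeg h) - int ?m else int (tdeg G)) - int i" for i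
  have "(\<Sum>i=0..<?m + ?n. r i) + (\<Sum>j=0..<?m + ?n. int j)
      = (\<Sum>i<?n + ?m. if i < ?n then int (tdeg h) - int ?m else int (tdeg G))"
    by (simp add: r_def lessThan_atLeast0 add.commute flip: sum.distrib)
  also have "\<dots> = int (?n * (tdeg h - ?m) + ?m * tdeg G)"
    using degree_le_tdeg[of h] by (simp add: sum_lessThan_if_less)
  finally have weights: "(\<Sum>i=0..<?m + ?n. r i) + (\<Sum>j=0..<?m + ?n. int j) = \<dots>" .
  have "degree (resultant h G) \<le> nat ((\<Sum>i=0..<?m + ?n. r i) + (\<Sum>j=0..<?m + ?n. int j))"
    unfolding resultant_def
    by (rule degree_det_le_weights[OF sylvester_carrier_mat])
      (use degree_sylvester_entry_le in \<open>auto simp: r_def\<close>)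
  then show ?thesis
    unfolding weights nat_int .
qed

subsection \<open>Roots and the resultant\<close>

lemma sylvester_row_eval:
  fixes P :: "'a::comm_ring_1 poly"
  assumes "r + degree P < N"
  shows "(\<Sum>j<N. coeff (monom 1 (Suc r) * P) (N - j) * x ^ (N - 1 - j)) = x ^ r * poly P x"
proof -
  have deg: "degree (monom 1 r * P) < N"
    using degree_mult_le[of "monom 1 r" P] degree_monom_le[of "1::'a" r] assms by linarith
  have "(\<Sum>j<N. coeff (monom 1 (Suc r) * P) (N - j) * x ^ (N - 1 - j))
      = (\<Sum>j<N. coeff (monom 1 r * P) (N - Suc j) * x ^ (N - Suc j))"
  proof (intro sum.cong refl)
    fix j assume "j \<in> {..<N}"
    then have "N - j = Suc (N - Suc j)" by auto
    then show "coeff (monom 1 (Suc r) * P) (N - j) * x ^ (N - 1 - j)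
        = coeff (monom 1 r * P) (N - Suc j) * x ^ (N - Suc j)"
      by (simp only: coeff_monom_Suc) simp
  qed
  also have "\<dots> = (\<Sum>t<N. coeff (monom 1 r * P) t * x ^ t)"
    by (rule sum.nat_diff_reindex)
  also have "\<dots> = (\<Sum>t\<le>degree (monom 1 r * P). coeff (monom 1 r * P) t * x ^ t)"
    using deg by (intro sum.mono_neutral_right) (auto simp: coeff_eq_0)
  also have "\<dots> = x ^ r * poly P x"
    by (simp add: poly_altdef[symmetric] poly_monom)
  finally show ?thesis .
qed

lemma sylvester_mat_mult_powers:
  fixes H Q :: "'a::comm_ring_1 poly"
  defines "N \<equiv> degree H + degree Q"
  assumes "poly Q x = 0"
  shows "sylvester_mat H Q *\<^sub>v vec N (\<lambda>j. x ^ (N - 1 - j))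
    = poly H x \<cdot>\<^sub>v vec N (\<lambda>i. if i < degree Q then x ^ (degree Q - 1 - i) else 0)"
    (is "?S *\<^sub>v ?w = _ \<cdot>\<^sub>v ?u")
proof (rule eq_vecI)
  fix i assume "i < dim_vec (poly H x \<cdot>\<^sub>v ?u)"
  then have i: "i < N" by simp
  have "(?S *\<^sub>v ?w) $ i = (\<Sum>j<N. (if i < degree Q then coeff (monom 1 (degree Q - i) * H) (N - j)
      else coeff (monom 1 (N - i) * Q) (N - j)) * x ^ (N - 1 - j))"
    using i unfolding N_def
    by (auto simp: scalar_prod_def lessThan_atLeast0 sylvester_index_mat2 intro!: sum.cong)
  also have "\<dots> = poly H x * ?u $ i"
  proof (cases "i < degree Q")
    case True
    then have "degree Q - i = Suc (degree Q - 1 - i)" by auto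
    with True i sylvester_row_eval[of "degree Q - 1 - i" H N x] show ?thesis
      by (simp add: N_def mult.commute)
  next
    case False
    then have "N - i = Suc (N - 1 - i)" using i by auto
    with False i sylvester_row_eval[of "N - 1 - i" Q N x] \<open>poly Q x = 0\<close> show ?thesis
      by (simp add: N_def)
  qed
  finally show "(?S *\<^sub>v ?w) $ i = (poly H x \<cdot>\<^sub>v ?u) $ i"
    using i by simp
qed (simp add: N_def)

lemma resultant_root_dvd:
  fixes H Q :: "'a::comm_ring_1 poly"
  assumes "poly Q x = 0" and "degree Q > 0"
  shows "poly H x dvd resultant H Q"
proof -
  define N where "N = degree H + degree Q"
  define S where "S = sylvester_mat H Q"
  define w where "w = vec N (\<lambda>j. x ^ (N - 1 - j))"
  define u where "u = vec N (\<lambda>i. if i < degree Q then x ^ (degree Q - 1 - i) else 0)"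
  have S: "S \<in> carrier_mat N N"
    unfolding S_def N_def by (rule sylvester_carrier_mat)
  have w: "w \<in> carrier_vec N" and u: "u \<in> carrier_vec N"
    unfolding w_def u_def by auto
  note adj = adj_mat[OF S]
  have "det S \<cdot>\<^sub>v w = det S \<cdot>\<^sub>v (1\<^sub>m N *\<^sub>v w)"
    using w by simp
  also have "\<dots> = (adj_mat S * S) *\<^sub>v w"
    using w by (auto simp: adj)
  also have "\<dots> = adj_mat S *\<^sub>v (S *\<^sub>v w)"
    by (rule assoc_mult_mat_vec[OF adj(1) S w])
  also have "S *\<^sub>v w = poly H x \<cdot>\<^sub>v u"
    unfolding S_def w_def u_def N_def by (rule sylvester_mat_mult_powers[OF assms(1)])
  also have "adj_mat S *\<^sub>v (poly H x \<cdot>\<^sub>v u) = poly H x \<cdot>\<^sub>v (adj_mat S *\<^sub>v u)"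
    using adj(1) u by (intro eq_vecI) auto
  \<comment> \<open>the last entry of \<open>w\<close> is \<open>x\<^sup>0 = 1\<close>\<close>
  finally have "(det S \<cdot>\<^sub>v w) $ (N - 1) = (poly H x \<cdot>\<^sub>v (adj_mat S *\<^sub>v u)) $ (N - 1)"
    by simp
  moreover have "N - 1 < N"
    using assms(2) by (simp add: N_def)
  ultimately have "det S = poly H x * (adj_mat S *\<^sub>v u) $ (N - 1)"
    using adj(1) u by (simp add: w_def)
  then show ?thesis
    unfolding resultant_def S_def by simp
qed

subsection \<open>The expansion along a branch\<close>

lemma C_expansion_mult: "C_expansion xi (a * b) = C_expansion xi a * C_expansion xi b"
  unfolding C_expansion_def by (simp add: map_fps_of_poly_hom.hom_mult pcompose_mult)

lemma C_expansion_power: "C_expansion xi (a ^ n) = C_expansion xi a ^ n"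
proof (induction n)
  case 0
  then show ?case
    by (simp add: C_expansion_def)
qed (simp add: C_expansion_mult)

lemma C_expansion_eq_0_iff: "C_expansion xi f = 0 \<longleftrightarrow> f = 0"
  unfolding C_expansion_def by (simp add: pcompose_eq_0_iff)

lemma coeff_C_expansion_0: "coeff (C_expansion xi f) 0 = poly (map_poly fps_of_poly f) xi"
  unfolding C_expansion_def by (simp add: poly_0_coeff_0[symmetric] poly_pcompose)

lemma coeff_C_expansion_nth_0:
  assumes "fps_nth xi 0 = 0"
  shows "fps_nth (coeff (C_expansion xi f) j) 0 = coeff (coeff f j) 0"
proof -
  have "map_poly (\<lambda>a. fps_nth a 0) (C_expansion xi f)
      = map_poly (\<lambda>a. fps_nth a 0) (map_poly fps_of_poly f) \<circ>\<^sub>p [:0, 1:]"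
    unfolding C_expansion_def fps_nth_0_hom.map_poly_pcompose using assms by simp
  also have "\<dots> = map_poly (\<lambda>c. coeff c 0) f"
    unfolding pcompose_idR by (simp add: map_poly_map_poly comp_def)
  finally have "map_poly (\<lambda>a. fps_nth a 0) (C_expansion xi f) = map_poly (\<lambda>c. coeff c 0) f" .
  from arg_cong[OF this, of "\<lambda>p. coeff p j"] show ?thesis
    by (simp add: coeff_map_poly)
qed

lemma v1_le_term:
  assumes "fps_nth (coeff (C_expansion xi f) j) i \<noteq> 0" and "s \<ge> 0"
  shows "v1 xi s f \<le> real i + s * real j"
  unfolding v1_def
  by (rule cInf_lower) (use assms in \<open>auto intro: bdd_belowI[of _ 0]\<close>)

lemma v1_geI:
  assumes "f \<noteq> 0"
    and "\<And>i j. fps_nth (coeff (C_expansion xi f) j) i \<noteq> 0 \<Longrightarrow> B \<le> real i + s * real j"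
  shows "B \<le> v1 xi s f"
  unfolding v1_def
proof (rule cInf_greatest)
  obtain j where "coeff (C_expansion xi f) j \<noteq> 0"
    using assms(1) C_expansion_eq_0_iff by (metis leading_coeff_neq_0)
  then obtain i where "fps_nth (coeff (C_expansion xi f) j) i \<noteq> 0"
    using fps_nonzero_nth by blast
  then show "{real i + s * real j |i j. fps_nth (coeff (C_expansion xi f) j) i \<noteq> 0} \<noteq> {}"
    by blast
qed (use assms(2) in blast)

text \<open>The only place where \<open>s \<ge> d\<^sup>2\<close> enters: the defect is \<open>(k - m d)(s - d\<^sup>2)/d\<close>.\<close>

lemma weighted_degree_bound:
  fixes k m t d s :: real
  assumes "d > 0" "d\<^sup>2 \<le> s" "t \<ge> 0" "m * d + t \<le> k"
  shows "t * d + s * m \<le> k * s / d"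
proof -
  have "(k - m * d) * (s - d\<^sup>2) \<ge> 0"
    using assms by (intro mult_nonneg_nonneg) auto
  moreover have "t * d\<^sup>2 \<le> (k - m * d) * d\<^sup>2"
    using assms by (intro mult_right_mono) auto
  ultimately have "(t * d + s * m) * d \<le> k * s"
    by (simp add: algebra_simps power2_eq_square)
  then show ?thesis
    using assms(1) by (simp add: pos_le_divide_eq)
qed

subsection \<open>A smooth branch of an irreducible curve\<close>

locale smooth_branch =
  fixes G :: "complex poly poly" and xi :: "complex fps"
  assumes irreducible: "irreducible G"
    and branch: "poly (map_poly fps_of_poly G) xi = 0"
    and xi_0: "fps_nth xi 0 = 0"
    and smooth: "coeff (coeff G 1) 0 \<noteq> 0"
begin

lemma degree_pos: "degree G > 0"
  using smooth le_degree[of G 1] by fastforce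

lemma tdeg_pos: "tdeg G > 0"
  using degree_pos degree_le_tdeg[of G] by linarith

lemma G_nonzero: "G \<noteq> 0"
  using degree_pos by auto

lemma C_expansion_branch:
  obtains U where "C_expansion xi G = monom 1 1 * U" and "fps_nth (coeff U 0) 0 \<noteq> 0"
proof -
  obtain a U where aU: "C_expansion xi G = pCons a U"
    by (rule pCons_cases)
  have "a = 0"
    using arg_cong[OF aU, of "\<lambda>p. coeff p 0"] branch by (simp add: coeff_C_expansion_0)
  then have "C_expansion xi G = monom 1 1 * U"
    using aU by (simp add: monom_Suc)
  moreover have "fps_nth (coeff U 0) 0 \<noteq> 0"
    using arg_cong[OF aU, of "\<lambda>p. fps_nth (coeff p 1) 0"] smooth
    by (simp add: coeff_C_expansion_nth_0[OF xi_0])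
  ultimately show ?thesis
    using that by blast
qed

lemma local_bezout:
  assumes "h \<noteq> 0" and "\<not> G dvd h"
  shows "poly (map_poly fps_of_poly h) xi \<noteq> 0"
    and "subdegree (poly (map_poly fps_of_poly h) xi) \<le> tdeg h * tdeg G"
proof -
  define R where "R = resultant h G"
  have "is_unit (gcd h G)"
    using irreducibleD'[OF irreducible, of "gcd h G"] assms(2) by (metis dvd_trans gcd_dvd1 gcd_dvd2)
  then have "R \<noteq> 0"
    unfolding R_def resultant_0_gcd by (auto elim: is_unit_polyE)
  have "poly (map_poly fps_of_poly h) xi dvd resultant (map_poly fps_of_poly h) (map_poly fps_of_poly G)"
    using degree_pos by (intro resultant_root_dvd[OF branch]) simp
  then have dvd: "poly (map_poly fps_of_poly h) xi dvd fps_of_poly R"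
    unfolding R_def fps_of_poly_hom.resultant_hom .
  with \<open>R \<noteq> 0\<close> show "poly (map_poly fps_of_poly h) xi \<noteq> 0"
    by auto
  have "subdegree (poly (map_poly fps_of_poly h) xi) \<le> subdegree (fps_of_poly R)"
    using dvd \<open>R \<noteq> 0\<close> by (intro dvd_imp_subdegree_le) auto
  also have "\<dots> \<le> degree R"
    using \<open>R \<noteq> 0\<close> by (intro subdegree_leI) (simp add: fps_of_poly_nth)
  also have "\<dots> \<le> degree G * (tdeg h - degree h) + degree h * tdeg G"
    unfolding R_def by (rule degree_resultant_le)
  also have "\<dots> \<le> tdeg G * (tdeg h - degree h) + degree h * tdeg G"
    using degree_le_tdeg[of G] by (simp add: mult_le_mono1)
  also have "\<dots> = tdeg G * (tdeg h - degree h + degree h)"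
    by (simp add: distrib_left mult.commute)
  also have "\<dots> = tdeg h * tdeg G"
    using degree_le_tdeg[of h] by (simp add: mult.commute)
  finally show "subdegree (poly (map_poly fps_of_poly h) xi) \<le> tdeg h * tdeg G" .
qed

lemma v1_power_ge:
  assumes "s \<ge> 0"
  shows "s * real m \<le> v1 xi s (G ^ m)"
proof (rule v1_geI)
  show "G ^ m \<noteq> 0"
    using G_nonzero by simp
  obtain U where U: "C_expansion xi G = monom 1 1 * U"
    using C_expansion_branch by blast
  fix i j assume "fps_nth (coeff (C_expansion xi (G ^ m)) j) i \<noteq> 0"
  moreover have "C_expansion xi (G ^ m) = monom 1 m * U ^ m"
    by (simp add: C_expansion_power U power_mult_distrib monom_power)
  ultimately have "m \<le> j"
    by (simp add: coeff_monom_mult split: if_splits)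
  then show "s * real m \<le> real i + s * real j"
    using assms by (simp add: mult_left_mono add_increasing)
qed

lemma v1_le_of_tdeg_le:
  assumes s: "s \<ge> real (tdeg G) ^ 2" and "f \<noteq> 0" and "tdeg f \<le> k"
  shows "v1 xi s f \<le> real k * s / real (tdeg G)"
proof -
  have "\<not> is_unit G"
    using degree_pos by (auto elim: is_unit_polyE)
  define m where "m = multiplicity G f"
  obtain h where fh: "f = G ^ m * h" and "\<not> G dvd h"
    using multiplicity_decompose'[OF \<open>f \<noteq> 0\<close> \<open>\<not> is_unit G\<close>] unfolding m_def by blast
  define ph where "ph = poly (map_poly fps_of_poly h) xi"
  have "h \<noteq> 0"
    using \<open>\<not> G dvd h\<close> by auto
  have "m * tdeg G + tdeg h \<le> k"
    using \<open>tdeg f \<le> k\<close> G_nonzero \<open>h \<noteq> 0\<close> by (simp add: fh tdeg_mult tdeg_power)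
  obtain U where U: "C_expansion xi G = monom 1 1 * U" and U0: "fps_nth (coeff U 0) 0 \<noteq> 0"
    using C_expansion_branch by blast
  have "C_expansion xi f = monom 1 m * (U ^ m * C_expansion xi h)"
    by (simp add: fh C_expansion_mult C_expansion_power U power_mult_distrib monom_power mult.assoc)
  then have "coeff (C_expansion xi f) m = coeff U 0 ^ m * ph"
    by (simp add: coeff_monom_mult coeff_mult_0 coeff_0_power coeff_C_expansion_0 ph_def)
  moreover have "ph \<noteq> 0"
    unfolding ph_def by (rule local_bezout(1)) fact+
  ultimately have "fps_nth (coeff (C_expansion xi f) m) (subdegree ph) \<noteq> 0"
    using U0 by (simp add: nth_subdegree_mult_right fps_nth_power_0)
  then have "v1 xi s f \<le> real (subdegree ph) + s * real m"
    by (rule v1_le_term) (use s in \<open>simp add: order_trans[OF zero_le_power2]\<close>)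
  also have "\<dots> \<le> real (tdeg h) * real (tdeg G) + s * real m"
    using local_bezout(2)[OF \<open>h \<noteq> 0\<close> \<open>\<not> G dvd h\<close>] unfolding ph_def of_nat_mult[symmetric] by linarith
  also have "\<dots> \<le> real k * s / real (tdeg G)"
    using \<open>m * tdeg G + tdeg h \<le> k\<close> tdeg_pos s
    by (intro weighted_degree_bound) (auto simp flip: of_nat_mult of_nat_add)
  finally show ?thesis .
qed

lemma max_v1_bounds:
  assumes s: "s \<ge> real (tdeg G) ^ 2"
  shows "s * real (k div tdeg G) \<le> max_v1 xi s k" and "max_v1 xi s k \<le> real k * s / real (tdeg G)"
proof -
  let ?V = "{v1 xi s f |f. f \<noteq> 0 \<and> tdeg f \<le> k}"
  have "tdeg (G ^ (k div tdeg G)) \<le> k"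
    using G_nonzero by (simp add: tdeg_power div_times_less_eq_dividend)
  then have witness: "v1 xi s (G ^ (k div tdeg G)) \<in> ?V"
    using G_nonzero by auto
  have bound: "v \<le> real k * s / real (tdeg G)" if "v \<in> ?V" for v
    using v1_le_of_tdeg_le[OF s] that by auto
  have "s * real (k div tdeg G) \<le> v1 xi s (G ^ (k div tdeg G))"
    using s by (intro v1_power_ge) (simp add: order_trans[OF zero_le_power2])
  also have "\<dots> \<le> Sup ?V"
    using witness bound by (intro cSup_upper bdd_aboveI) auto
  finally show "s * real (k div tdeg G) \<le> max_v1 xi s k"
    unfolding max_v1_def .
  show "max_v1 xi s k \<le> real k * s / real (tdeg G)"
    unfolding max_v1_def using witness bound by (intro cSup_least) auto
qed

end

lemma tendsto_div_of_div_bounds: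
  fixes a :: "nat \<Rightarrow> real"
  assumes "d > 0" and "c \<ge> 0"
    and lower: "\<And>k. c * real (k div d) \<le> a k" and upper: "\<And>k. a k \<le> real k * c / real d"
  shows "(\<lambda>k. a k / real k) \<longlonglongrightarrow> c / real d"
proof (rule real_tendsto_sandwich)
  have "(\<lambda>k. c / real d - c / real k) \<longlonglongrightarrow> c / real d - 0"
    using lim_const_over_n[of c] by (intro tendsto_diff) auto
  then show "(\<lambda>k. c / real d - c / real k) \<longlonglongrightarrow> c / real d"
    by simp
  show "\<forall>\<^sub>F k in sequentially. c / real d - c / real k \<le> a k / real k"
  proof (rule eventually_sequentiallyI[of 1])
    fix k :: nat assume "1 \<le> k"
    have "real k < real d + real (k div d) * real d"
      using dividend_less_div_times[OF \<open>d > 0\<close>, of k] by (metis of_nat_add of_nat_less_iff of_nat_mult)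
    then have "real k / real d - 1 \<le> real (k div d)"
      using \<open>d > 0\<close> by (simp add: field_simps)
    have "c / real d - c / real k = c * (real k / real d - 1) / real k"
      using \<open>1 \<le> k\<close> \<open>d > 0\<close> by (simp add: field_simps)
    also have "\<dots> \<le> c * real (k div d) / real k"
      using \<open>real k / real d - 1 \<le> real (k div d)\<close> \<open>c \<ge> 0\<close>
      by (intro divide_right_mono mult_left_mono) auto
    also have "\<dots> \<le> a k / real k"
      using lower[of k] by (intro divide_right_mono) auto
    finally show "c / real d - c / real k \<le> a k / real k" .
  qed
  show "\<forall>\<^sub>F k in sequentially. a k / real k \<le> c / real d"
    using upper by (intro eventually_sequentiallyI[of 1]) (simp add: field_simps)
qed simp

theorem corollary5p13:
  fixes G :: "complex poly poly" and xi :: "complex fps" and d :: nat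
  assumes irred: "irreducible G"
    and deg: "tdeg G = d"
    and through_O: "coeff (coeff G 0) 0 = 0"
    and smooth_O: "coeff (coeff G 1) 0 \<noteq> 0"
    and branch: "poly (map_poly fps_of_poly G) xi = 0"
    and xi0: "fps_nth xi 0 = 0" and xi1: "fps_nth xi 1 = 0"
  shows "(\<forall>s::real. s \<ge> real d ^ 2 \<longrightarrow>
            (\<lambda>k. max_v1 xi s k / real k) \<longlonglongrightarrow> s / real d
            \<and> mu_hat xi s = s / real d)
         \<and> v1_minimal xi (real d ^ 2)
         \<and> (\<forall>s::real. s > real d ^ 2 \<longrightarrow> \<not> v1_minimal xi s)"
proof -
  \<comment> \<open>\<open>through_O\<close> follows from \<open>branch\<close> and \<open>xi0\<close>.\<close>
  interpret smooth_branch G xi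
    using irred branch xi0 smooth_O by unfold_locales
  have "d > 0"
    using tdeg_pos deg by simp
  have lim: "(\<lambda>k. max_v1 xi s k / real k) \<longlonglongrightarrow> s / real d" if "s \<ge> real d ^ 2" for s
    using that \<open>d > 0\<close> max_v1_bounds[of s] unfolding deg
    by (intro tendsto_div_of_div_bounds) (auto simp: order_trans[OF zero_le_power2])
  have mu: "mu_hat xi s = s / real d" if "s \<ge> real d ^ 2" for s
    unfolding mu_hat_def using lim[OF that] by (rule limI)
  have "\<not> v1_minimal xi s" if "s > real d ^ 2" for s
  proof
    assume "v1_minimal xi s"
    then have "s / real d = sqrt s"
      using mu that unfolding v1_minimal_def by simp
    moreover have "real d < sqrt s"
      using real_sqrt_less_mono[OF that] by simp
    then have "sqrt s * real d < sqrt s * sqrt s"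
      using \<open>d > 0\<close> by (intro mult_strict_left_mono) linarith+
    then have "sqrt s < s / real d"
      using \<open>d > 0\<close> le_less_trans[OF zero_le_power2 that] by (simp add: field_simps)
    ultimately show False
      by simp
  qed
  then show ?thesis
    using lim mu \<open>d > 0\<close> unfolding v1_minimal_def by (simp add: power2_eq_square)
qed

end
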